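(* Let $d\ge 3$, let $q$ be a prime power, let $V=\mathbb{F}_q^d$ and $1\le k<d/2$. Let $G$ be a group with $\mathrm{PSL}_d(q)\trianglelefteq G\le \mathrm{Aut}(\mathrm{PSL}_d(q))=\mathrm{P}\Gamma\mathrm{L}_d(q)\rtimes\langle\iota\rangle$ and $G\not\le \mathrm{P}\Gamma\mathrm{L}_d(q)$, acting naturally on $$\Omega_k^2=\{\{W,U\}\mid \dim W=k,\ \dim U=d-k,\ W\le U\}.$$ Then $G$ is not $\mathrm{IBIS}$.
   Context: Here $\iota$ is the graph (inverse-transpose) automorphism, which acts on subspaces of $V$ as the standard polarity sending a $k$-dimensional subspace to a $(d-k)$-dimensional one (reversing inclusions). A base of a permutation group is a sequence of points with trivial pointwise stabilizer; it is irredundant if each successive stabilizer is strictly smaller. $G$ is $\mathrm{IBIS}$ if all irredundant bases have the same cardinality. *)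

theory Defs
  imports "HOL-Analysis.Analysis" "HOL-Algebra.Algebra"
begin

text \<open>V = F_q^d is modelled as 'a^'n with 'a a finite field (so q = CARD('a) is a
prime power) and d = CARD('n).\<close>

definition flags2 :: "nat \<Rightarrow> ('a::{field,finite}^'n) set set set" where
  "flags2 k = {{W, U} | W U. vec.subspace W \<and> vec.subspace U \<and>
       vec.dim W = k \<and> vec.dim U = CARD('n) - k \<and> W \<subseteq> U}"

definition field_aut :: "('a::field \<Rightarrow> 'a) \<Rightarrow> bool" where
  "field_aut s \<longleftrightarrow> bij s \<and> (\<forall>a b. s (a + b) = s a + s b) \<and> (\<forall>a b. s (a * b) = s a * s b)"

definition semilinear :: "('a::field^'n \<Rightarrow> 'a^'n) \<Rightarrow> bool" where
  "semilinear f \<longleftrightarrow> bij f \<and> (\<forall>x y. f (x + y) = f x + f y) \<and>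
     (\<exists>s. field_aut s \<and> (\<forall>c x. f (c *s x) = s c *s f x))"

definition std_perp :: "('a::field^'n) set \<Rightarrow> ('a^'n) set" where
  "std_perp S = {x. \<forall>y\<in>S. sum (\<lambda>j. x $ j * y $ j) UNIV = 0}"

text \<open>Induced permutation of the set Omega of flags (extensional, as in BijGroup).\<close>
definition induced :: "('a set \<Rightarrow> 'a set) \<Rightarrow> 'a set set set \<Rightarrow> ('a set set \<Rightarrow> 'a set set)" where
  "induced h Om = (\<lambda>w\<in>Om. h ` w)"

definition PSL_perms :: "nat \<Rightarrow> (('a::{field,finite}^'n) set set \<Rightarrow> ('a^'n) set set) set" where
  "PSL_perms k = {induced (\<lambda>S. (\<lambda>x. M *v x) ` S) (flags2 k) | M :: 'a^'n^'n. det M = 1}"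

definition PGammaL_perms :: "nat \<Rightarrow> (('a::{field,finite}^'n) set set \<Rightarrow> ('a^'n) set set) set" where
  "PGammaL_perms k = {induced (\<lambda>S. f ` S) (flags2 k) | f :: 'a^'n \<Rightarrow> 'a^'n. semilinear f}"

definition iota_perm :: "nat \<Rightarrow> (('a::{field,finite}^'n) set set \<Rightarrow> ('a^'n) set set)" where
  "iota_perm k = induced std_perp (flags2 k)"

text \<open>Aut(PSL_d(q)) = P Gamma L_d(q) extended by the graph automorphism iota, acting on Omega.\<close>
definition Aut_perms :: "nat \<Rightarrow> (('a::{field,finite}^'n) set set \<Rightarrow> ('a^'n) set set) set" where
  "Aut_perms k = generate (BijGroup (flags2 k)) (insert (iota_perm k) (PGammaL_perms k))"

definition pstab :: "('b \<Rightarrow> 'b) set \<Rightarrow> 'b list \<Rightarrow> ('b \<Rightarrow> 'b) set" where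
  "pstab G bs = {g\<in>G. \<forall>x\<in>set bs. g x = x}"

definition is_base :: "'b set \<Rightarrow> ('b \<Rightarrow> 'b) set \<Rightarrow> 'b list \<Rightarrow> bool" where
  "is_base Om G bs \<longleftrightarrow> set bs \<subseteq> Om \<and> pstab G bs = {\<one>\<^bsub>BijGroup Om\<^esub>}"

definition irredundant_base :: "'b set \<Rightarrow> ('b \<Rightarrow> 'b) set \<Rightarrow> 'b list \<Rightarrow> bool" where
  "irredundant_base Om G bs \<longleftrightarrow> is_base Om G bs \<and>
     (\<forall>i < length bs. pstab G (take (Suc i) bs) \<subset> pstab G (take i bs))"

definition IBIS :: "'b set \<Rightarrow> ('b \<Rightarrow> 'b) set \<Rightarrow> bool" where
  "IBIS Om G \<longleftrightarrow> (\<forall>b1 b2. irredundant_base Om G b1 \<and> irredundant_base Om G b2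
      \<longrightarrow> length b1 = length b2)"

end

theory Submission
  imports Defs
begin

text \<open>
  Take coordinate subspaces W, W' of dimension k and U, U' of dimension d - k with
  W, W' \<subseteq> U, W \<subseteq> U', W' \<not>\<subseteq> U', W \<noteq> W' and U \<noteq> U'. Since k \<noteq> d - k,
  y = {W, U} is the only flag sharing a component with both x1 = {W, U'} and x2 = {W', U}.
  Every automorphism of PSL_d(q), the graph automorphism included, preserves the relation of
  sharing a component, so the pointwise stabiliser of x1, x2 in G fixes y. Transvections in
  PSL_d(q) show that both (y, x1, x2) and (x1, x2) are irredundant; completing each by sifting
  the same listing of all flags gives irredundant bases whose lengths differ by one.
\<close>

section \<open>Irredundant sequences and bases\<close>

definition irredundant_seq :: "('b \<Rightarrow> 'b) set \<Rightarrow> 'b list \<Rightarrow> bool" where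
  "irredundant_seq G bs \<longleftrightarrow> (\<forall>i < length bs. pstab G (take (Suc i) bs) \<subset> pstab G (take i bs))"

lemma pstab_Nil [simp]: "pstab G [] = G"
  by (simp add: pstab_def)

lemma pstab_subset: "pstab G bs \<subseteq> G"
  by (auto simp: pstab_def)

lemma pstab_append: "pstab G (xs @ ys) = pstab (pstab G xs) ys"
  by (auto simp: pstab_def)

lemma pstab_Cons: "pstab G (x # xs) = pstab (pstab G [x]) xs"
  using pstab_append[of G "[x]" xs] by simp

lemma irredundant_seq_Nil [simp]: "irredundant_seq G []"
  by (simp add: irredundant_seq_def)

lemma irredundant_seq_appendI:
  assumes xs: "irredundant_seq G xs" and ys: "irredundant_seq (pstab G xs) ys"
  shows "irredundant_seq G (xs @ ys)"
  unfolding irredundant_seq_def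
proof (intro allI impI)
  fix i assume i: "i < length (xs @ ys)"
  show "pstab G (take (Suc i) (xs @ ys)) \<subset> pstab G (take i (xs @ ys))"
  proof (cases "i < length xs")
    case True
    then show ?thesis using xs by (simp add: irredundant_seq_def)
  next
    case False
    then obtain j where j: "i = length xs + j" "j < length ys"
      using i by (metis add_less_imp_less_left le_Suc_ex length_append not_le)
    then show ?thesis using ys by (simp add: irredundant_seq_def pstab_append)
  qed
qed

lemma irredundant_seq_ConsI:
  "pstab G [x] \<subset> G \<Longrightarrow> irredundant_seq (pstab G [x]) xs \<Longrightarrow> irredundant_seq G (x # xs)"
  using irredundant_seq_appendI[of G "[x]" xs] by (simp add: irredundant_seq_def)

lemma irredundant_seq_snocI:
  assumes "irredundant_seq G xs" "g \<in> G" "\<forall>z\<in>set xs. g z = z" "g x \<noteq> x"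
  shows "irredundant_seq G (xs @ [x])"
proof (rule irredundant_seq_appendI)
  have "g \<in> pstab G xs - pstab (pstab G xs) [x]"
    using assms(2-4) by (simp add: pstab_def)
  then show "irredundant_seq (pstab G xs) [x]"
    using pstab_subset[of "pstab G xs" "[x]"] by (auto simp: irredundant_seq_def)
qed (rule assms(1))

fun sift :: "('b \<Rightarrow> 'b) set \<Rightarrow> 'b list \<Rightarrow> 'b list" where
  "sift H [] = []"
| "sift H (x # xs) = (if pstab H [x] = H then sift H xs else x # sift (pstab H [x]) xs)"

lemma set_sift: "set (sift H xs) \<subseteq> set xs"
  by (induction H xs rule: sift.induct) auto

lemma pstab_sift: "pstab H (sift H xs) = pstab H xs"
proof (induction H xs rule: sift.induct)
  case (2 H x xs)
  then show ?case
    using pstab_Cons[of H x xs] pstab_Cons[of H x "sift (pstab H [x]) xs"] by simp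
qed simp

lemma irredundant_seq_sift: "irredundant_seq H (sift H xs)"
proof (induction H xs rule: sift.induct)
  case (2 H x xs)
  then show ?case
    using pstab_subset[of H "[x]"] by (auto intro: irredundant_seq_ConsI)
qed simp

lemma pstab_eq_one_if_set_eq:
  assumes "subgroup G (BijGroup Om)" "set bs = Om"
  shows "pstab G bs = {\<one>\<^bsub>BijGroup Om\<^esub>}"
proof -
  have "g = \<one>\<^bsub>BijGroup Om\<^esub>" if "g \<in> pstab G bs" for g
  proof -
    have "g \<in> Bij Om" "\<forall>x\<in>Om. g x = x"
      using that assms subgroup.subset[OF assms(1)] by (auto simp: pstab_def BijGroup_def)
    then show ?thesis
      by (auto simp: BijGroup_def Bij_def extensional_def restrict_def fun_eq_iff)
  qed
  moreover have "\<one>\<^bsub>BijGroup Om\<^esub> \<in> pstab G bs"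
    using subgroup.one_closed[OF assms(1)] assms(2) by (auto simp: pstab_def BijGroup_def)
  ultimately show ?thesis by blast
qed

lemma irredundant_base_sift_complete:
  assumes G: "subgroup G (BijGroup Om)" and L: "set L = Om"
    and "set bs \<subseteq> Om" "irredundant_seq G bs"
  shows "irredundant_base Om G (bs @ sift (pstab G bs) L)"
proof -
  have "pstab G (bs @ sift (pstab G bs) L) = pstab G (bs @ L)"
    by (simp add: pstab_append pstab_sift)
  also have "\<dots> = {\<one>\<^bsub>BijGroup Om\<^esub>}"
    by (intro pstab_eq_one_if_set_eq[OF G]) (use L assms(3) in auto)
  finally have "is_base Om G (bs @ sift (pstab G bs) L)"
    using assms(3) set_sift[of "pstab G bs" L] L by (auto simp: is_base_def)
  moreover have "irredundant_seq G (bs @ sift (pstab G bs) L)"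
    by (rule irredundant_seq_appendI[OF assms(4) irredundant_seq_sift])
  ultimately show ?thesis
    by (simp add: irredundant_base_def irredundant_seq_def)
qed

lemma not_IBIS_if_pstab_eq:
  assumes G: "subgroup G (BijGroup Om)" and "finite Om"
    and "set bs \<subseteq> Om" "irredundant_seq G bs" "set cs \<subseteq> Om" "irredundant_seq G cs"
    and "pstab G bs = pstab G cs" "length bs \<noteq> length cs"
  shows "\<not> IBIS Om G"
proof -
  obtain L where L: "set L = Om" using \<open>finite Om\<close> finite_list by blast
  have "irredundant_base Om G (bs @ sift (pstab G bs) L)"
    "irredundant_base Om G (cs @ sift (pstab G bs) L)"
    using irredundant_base_sift_complete[OF G L] assms by metis+
  then show ?thesis using assms(8) unfolding IBIS_def by fastforce
qed

section \<open>Permutations of set systems preserving meeting\<close>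

definition preserves_meeting :: "'b set set \<Rightarrow> ('b set \<Rightarrow> 'b set) \<Rightarrow> bool" where
  "preserves_meeting Om g \<longleftrightarrow> (\<forall>a\<in>Om. \<forall>b\<in>Om. a \<inter> b \<noteq> {} \<longrightarrow> g a \<inter> g b \<noteq> {})"

lemma preserves_meeting_induced: "preserves_meeting Om (induced h Om)"
  by (auto simp: preserves_meeting_def induced_def)

lemma preserves_meetingD:
  assumes "preserves_meeting Om g" "a \<in> Om" "b \<in> Om" "a \<inter> b \<noteq> {}"
  shows "g a \<inter> g b \<noteq> {}"
  using assms(1)[unfolded preserves_meeting_def, rule_format, OF assms(2-4)] .

text \<open>The permutation maps the finite set of meeting pairs injectively into itself, hence onto it.\<close>
lemma preserves_meeting_reflects:
  assumes "finite Om" and h: "bij_betw h Om Om" and "preserves_meeting Om h"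
    and "a \<in> Om" "b \<in> Om" "h a \<inter> h b \<noteq> {}"
  shows "a \<inter> b \<noteq> {}"
proof -
  define R where "R = {(a, b) \<in> Om \<times> Om. a \<inter> b \<noteq> {}}"
  have inj: "inj_on h Om" using h by (rule bij_betw_imp_inj_on)
  have "map_prod h h ` R = R"
  proof (rule endo_inj_surj)
    show "finite R" using \<open>finite Om\<close> by (auto simp: R_def intro: finite_subset)
    show "map_prod h h ` R \<subseteq> R"
      using h \<open>preserves_meeting Om h\<close> by (auto simp: R_def preserves_meeting_def bij_betwE)
    show "inj_on (map_prod h h) R"
      using map_prod_inj_on[OF inj inj] by (rule inj_on_subset) (auto simp: R_def)
  qed
  moreover have "(h a, h b) \<in> R" using assms h by (auto simp: R_def bij_betwE)
  ultimately have "(h a, h b) \<in> map_prod h h ` R" by simp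
  then obtain a' b' where "(a', b') \<in> R" "h a' = h a" "h b' = h b" by force
  moreover from this have "a' = a" "b' = b"
    using inj assms(4,5) by (auto simp: R_def inj_on_def)
  ultimately show ?thesis by (simp add: R_def)
qed

lemma preserves_meeting_inv:
  assumes "finite Om" "h \<in> Bij Om" "preserves_meeting Om h"
  shows "preserves_meeting Om (inv\<^bsub>BijGroup Om\<^esub> h)"
proof -
  have h: "bij_betw h Om Om" using assms(2) by (simp add: Bij_def)
  show ?thesis
    unfolding preserves_meeting_def inv_BijGroup[OF assms(2)]
    using preserves_meeting_reflects[OF assms(1) h assms(3)] h
    by (simp add: bij_betw_inv_into_left bij_betw_inv_into_right bij_betwE[OF bij_betw_inv_into[OF h]])
qed

lemma preserves_meeting_generate:
  assumes "finite Om" "H \<subseteq> Bij Om" "\<forall>h\<in>H. preserves_meeting Om h"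
    and "g \<in> generate (BijGroup Om) H"
  shows "preserves_meeting Om g"
  using assms(4)
proof (induction rule: generate.induct)
  case one
  then show ?case by (auto simp: BijGroup_def preserves_meeting_def)
next
  case (incl h)
  then show ?case using assms(3) by blast
next
  case (inv h)
  then show ?case using assms preserves_meeting_inv by blast
next
  case (eng g h)
  have "g \<in> Bij Om" and h: "h \<in> Bij Om"
    using eng(1,2) group.generate_in_carrier[OF group_BijGroup] assms(2)
    by (auto simp: BijGroup_def)
  show ?case
    unfolding preserves_meeting_def
  proof (intro ballI impI)
    fix a b assume ab: "a \<in> Om" "b \<in> Om" "a \<inter> b \<noteq> {}"
    then have "h a \<in> Om" "h b \<in> Om" "h a \<inter> h b \<noteq> {}"
      using h eng(4) by (auto simp: Bij_def bij_betwE preserves_meeting_def)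
    then have "g (h a) \<inter> g (h b) \<noteq> {}"
      using eng(3) by (auto simp: preserves_meeting_def)
    then show "(g \<otimes>\<^bsub>BijGroup Om\<^esub> h) a \<inter> (g \<otimes>\<^bsub>BijGroup Om\<^esub> h) b \<noteq> {}"
      using ab \<open>g \<in> Bij Om\<close> h by (simp add: BijGroup_def compose_eq)
  qed
qed

lemma pstab_Cons_eq_if_unique_meeting:
  assumes "\<forall>g\<in>G. g \<in> Bij Om \<and> preserves_meeting Om g"
    and "y \<in> Om" "set xs \<subseteq> Om" "\<forall>x\<in>set xs. y \<inter> x \<noteq> {}"
    and "\<forall>c\<in>Om. (\<forall>x\<in>set xs. c \<inter> x \<noteq> {}) \<longrightarrow> c = y"
  shows "pstab G (y # xs) = pstab G xs"
proof -
  have "g y = y" if g: "g \<in> pstab G xs" for g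
  proof -
    have g: "g \<in> Bij Om" "preserves_meeting Om g" "\<forall>x\<in>set xs. g x = x"
      using g assms(1) by (auto simp: pstab_def)
    have "\<forall>x\<in>set xs. g y \<inter> x \<noteq> {}"
    proof
      fix x assume x: "x \<in> set xs"
      have "g y \<inter> g x \<noteq> {}"
        using x assms(3,4) by (intro preserves_meetingD[OF g(2) assms(2)]) auto
      then show "g y \<inter> x \<noteq> {}" using g(3) x by simp
    qed
    moreover have "g y \<in> Om" using g(1) assms(2) by (auto simp: Bij_def bij_betw_def)
    ultimately show ?thesis using assms(5) by blast
  qed
  then show ?thesis by (auto simp: pstab_def)
qed

section \<open>The standard polarity\<close>

definition std_form :: "'a::field^'n \<Rightarrow> 'a^'n \<Rightarrow> 'a" where
  "std_form x y = (\<Sum>j\<in>UNIV. x $ j * y $ j)"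

lemma std_perp_eq: "std_perp S = {x. \<forall>y\<in>S. std_form x y = 0}"
  by (simp add: std_perp_def std_form_def)

lemma std_form_commute: "std_form x y = std_form y x"
  by (simp add: std_form_def mult.commute)

lemma std_form_add_left: "std_form (x + z) y = std_form x y + std_form z y"
  by (simp add: std_form_def distrib_right sum.distrib)

lemma std_form_scale_left: "std_form (c *s x) y = c * std_form x y"
  by (simp add: std_form_def sum_distrib_left mult.assoc)

lemma std_form_zero_left [simp]: "std_form 0 y = 0"
  by (simp add: std_form_def)

lemma std_form_axis_right: "std_form x (axis i 1) = x $ i"
proof -
  have "std_form x (axis i 1) = (\<Sum>j\<in>UNIV. if j = i then x $ j else 0)"
    unfolding std_form_def by (rule sum.cong) (auto simp: axis_def)
  then show ?thesis by simp
qed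

lemma subspace_std_perp: "vec.subspace (std_perp S)"
  unfolding vec.subspace_def std_perp_eq
  by (auto simp: std_form_add_left std_form_scale_left)

lemma std_perp_antimono: "S \<subseteq> T \<Longrightarrow> std_perp T \<subseteq> std_perp S"
  by (auto simp: std_perp_def)

lemma subset_std_perp_std_perp: "S \<subseteq> std_perp (std_perp S)"
  by (auto simp: std_perp_eq std_form_commute)

lemma std_perp_span: "std_perp (vec.span S) = std_perp S"
proof
  show "std_perp (vec.span S) \<subseteq> std_perp S"
    by (intro std_perp_antimono vec.span_superset)
  show "std_perp S \<subseteq> std_perp (vec.span S)"
  proof
    fix x assume x: "x \<in> std_perp S"
    have "vec.subspace {y. std_form x y = 0}"
      unfolding vec.subspace_def
      by (auto simp: std_form_commute[of x] std_form_add_left std_form_scale_left)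
    then have "vec.span S \<subseteq> {y. std_form x y = 0}"
      using x by (intro vec.span_minimal) (auto simp: std_perp_eq)
    then show "x \<in> std_perp (vec.span S)" by (auto simp: std_perp_eq)
  qed
qed

lemma std_perp_UNIV: "std_perp UNIV = {0}"
  by (auto simp: std_perp_eq vec_eq_iff std_form_axis_right[symmetric])

definition coordinate_subspace :: "'n set \<Rightarrow> ('a::field^'n) set" where
  "coordinate_subspace J = {x. \<forall>i. i \<notin> J \<longrightarrow> x $ i = 0}"

lemma subspace_coordinate_subspace: "vec.subspace (coordinate_subspace J)"
  by (auto simp: vec.subspace_def coordinate_subspace_def)

lemma dim_coordinate_subspace:
  "vec.dim (coordinate_subspace J :: ('a::field^'n::finite) set) = card J"
  unfolding coordinate_subspace_def by (rule dim_substandard_cart)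

lemma axis_in_coordinate_subspace: "axis i c \<in> coordinate_subspace J \<longleftrightarrow> i \<in> J \<or> c = 0"
  by (auto simp: coordinate_subspace_def axis_def)

lemma coordinate_subspace_subset_iff:
  "coordinate_subspace J \<subseteq> (coordinate_subspace J' :: ('a::field^'n) set) \<longleftrightarrow> J \<subseteq> J'"
proof
  assume sub: "coordinate_subspace J \<subseteq> (coordinate_subspace J' :: ('a^'n) set)"
  show "J \<subseteq> J'"
  proof
    fix i assume "i \<in> J"
    then have "(axis i 1 :: 'a^'n) \<in> coordinate_subspace J'"
      using sub axis_in_coordinate_subspace[of i "1::'a"] by blast
    then show "i \<in> J'" by (simp add: axis_in_coordinate_subspace)
  qed
qed (auto simp: coordinate_subspace_def)

lemma matrix_rows_mult_eq_std_form: "((\<chi> j. \<beta> j) *v x) $ j = std_form x (\<beta> j)"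
  by (simp add: matrix_vector_mult_def std_form_def mult.commute)

lemma inj_matrix_spanning_rows:
  assumes "UNIV \<subseteq> vec.span (range \<beta>)"
  shows "inj ((*v) (\<chi> j. \<beta> j :: 'a::field^'n::finite^'n))"
  unfolding vec.inj_iff_eq_0
proof (intro allI impI)
  fix x assume "(\<chi> j. \<beta> j :: 'a^'n^'n) *v x = 0"
  then have "x \<in> std_perp (range \<beta>)"
    by (auto simp: std_perp_eq matrix_rows_mult_eq_std_form[symmetric])
  moreover have "vec.span (range \<beta>) = UNIV" using assms by blast
  then have "std_perp (range \<beta>) = {0}"
    by (metis std_perp_span std_perp_UNIV)
  ultimately show "x = 0" by simp
qed

text \<open>Extend a basis of S to a basis of the whole space and use it as the rows of an invertible
  matrix; it maps the orthogonal complement of S onto a coordinate subspace of the complementary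
  dimension.\<close>
lemma dim_std_perp:
  fixes S :: "('a::field^'n::finite) set"
  assumes S: "vec.subspace S"
  shows "vec.dim (std_perp S) = CARD('n) - vec.dim S"
proof -
  obtain B where B: "B \<subseteq> S" "vec.independent B" "S \<subseteq> vec.span B" "card B = vec.dim S"
    by (rule vec.basis_exists)
  obtain C where C: "B \<subseteq> C" "vec.independent C" "UNIV \<subseteq> vec.span C"
    by (rule vec.maximal_independent_subset_extend[OF subset_UNIV B(2)])
  have "card C = CARD('n)"
    using vec.basis_card_eq_dim[OF subset_UNIV C(3,2)] by (simp only: vec_dim_card)
  then obtain \<beta> where \<beta>: "bij_betw \<beta> (UNIV :: 'n set) C"
    using finite_same_card_bij[of "UNIV :: 'n set" C] vec.finiteI_independent[OF C(2)] by auto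
  define A :: "'a^'n^'n" where "A = (\<chi> j. \<beta> j)"
  define I where "I = \<beta> -` B"
  have "std_perp S = std_perp B"
    using vec.span_minimal[OF B(1) S] B(1,3) std_perp_span[of B] by (metis subset_antisym)
  then have perp_S: "std_perp S = {x. \<forall>j\<in>I. (A *v x) $ j = 0}"
    using \<beta> C(1) by (auto simp: std_perp_eq A_def matrix_rows_mult_eq_std_form I_def bij_betw_def)
  have inj: "inj ((*v) A)"
    unfolding A_def using \<beta> C(3) by (intro inj_matrix_spanning_rows) (simp add: bij_betw_def)
  have surj: "surj ((*v) A)"
    using inj by (rule vec.linear_inj_imp_surj[OF matrix_vector_mul_linear_gen])
  have "(*v) A ` std_perp S = coordinate_subspace (- I)"
  proof
    show "(*v) A ` std_perp S \<subseteq> coordinate_subspace (- I)"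
      unfolding perp_S by (auto simp: coordinate_subspace_def)
    show "coordinate_subspace (- I) \<subseteq> (*v) A ` std_perp S"
    proof
      fix v :: "'a^'n" assume v: "v \<in> coordinate_subspace (- I)"
      obtain x where "v = A *v x" using surj by (metis surjD)
      then show "v \<in> (*v) A ` std_perp S"
        using v unfolding perp_S by (auto simp: coordinate_subspace_def)
    qed
  qed
  moreover have "vec.dim ((*v) A ` std_perp S) = vec.dim (std_perp S)"
    using inj by (intro vec.dim_image_eq[OF matrix_vector_mul_linear_gen]) (auto intro: inj_on_subset)
  ultimately have "vec.dim (std_perp S) = card (- I)"
    by (metis dim_coordinate_subspace)
  moreover have "card I = card B"
    unfolding I_def using \<beta> C(1) by (intro card_vimage_inj) (auto simp: bij_betw_def)
  ultimately show ?thesis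
    using B(4) card_Diff_subset[of I UNIV] by (simp add: Compl_eq_Diff_UNIV)
qed

lemma std_perp_std_perp:
  fixes S :: "('a::field^'n::finite) set"
  assumes S: "vec.subspace S"
  shows "std_perp (std_perp S) = S"
proof -
  have "vec.dim S \<le> CARD('n)"
    using vec.dim_subset[of S UNIV] vec_dim_card by (metis subset_UNIV)
  then have "vec.dim (std_perp (std_perp S)) = vec.dim S"
    using dim_std_perp[OF S] dim_std_perp[OF subspace_std_perp, of S] by simp
  then show ?thesis
    using vec.subspace_dim_equal[OF S subspace_std_perp subset_std_perp_std_perp] by simp
qed

section \<open>Semilinear bijections\<close>

lemma semilinear_add: "semilinear f \<Longrightarrow> f (x + y) = f x + f y"
  by (simp add: semilinear_def)

lemma semilinear_bij: "semilinear f \<Longrightarrow> bij f"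
  by (simp add: semilinear_def)

lemma semilinearE:
  assumes "semilinear f"
  obtains s where "surj s" "\<forall>c x. f (c *s x) = s c *s f x"
  using assms unfolding semilinear_def field_aut_def bij_def by blast

lemma semilinear_zero: "semilinear f \<Longrightarrow> f 0 = 0"
  using semilinear_add[of f 0 0] by simp

lemma semilinear_image_subspace:
  assumes f: "semilinear f" and S: "vec.subspace S"
  shows "vec.subspace (f ` S)"
proof -
  obtain s where s: "surj s" "\<forall>c x. f (c *s x) = s c *s f x"
    by (rule semilinearE[OF f])
  show ?thesis
    unfolding vec.subspace_def
  proof (intro conjI ballI allI)
    have "f 0 \<in> f ` S" using S by (intro imageI vec.subspace_0)
    then show "0 \<in> f ` S" by (simp add: semilinear_zero[OF f])
  next
    fix u v assume "u \<in> f ` S" "v \<in> f ` S"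
    then obtain x y where "x \<in> S" "y \<in> S" "u + v = f (x + y)"
      by (auto simp: semilinear_add[OF f])
    then show "u + v \<in> f ` S" using S by (simp add: vec.subspace_add)
  next
    fix c u assume "u \<in> f ` S"
    then obtain x where x: "x \<in> S" "u = f x" by blast
    obtain c' where "c = s c'" using surjD[OF s(1)] by blast
    then have "c *s u = f (c' *s x)" using s(2) x(2) by simp
    then show "c *s u \<in> f ` S" using S x(1) by (simp add: vec.subspace_scale)
  qed
qed

lemma semilinear_image_span:
  assumes f: "semilinear f"
  shows "f ` vec.span Y = vec.span (f ` Y)"
proof
  obtain s where s: "\<forall>c x. f (c *s x) = s c *s f x"
    by (rule semilinearE[OF f])
  have "vec.subspace {x. f x \<in> vec.span (f ` Y)}"
    unfolding vec.subspace_def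
    by (simp add: semilinear_zero[OF f] semilinear_add[OF f] s vec.span_zero vec.span_add vec.span_scale)
  then have "vec.span Y \<subseteq> {x. f x \<in> vec.span (f ` Y)}"
    by (rule vec.span_minimal[rotated]) (auto intro: vec.span_base)
  then show "f ` vec.span Y \<subseteq> vec.span (f ` Y)" by auto
  show "vec.span (f ` Y) \<subseteq> f ` vec.span Y"
    using semilinear_image_subspace[OF f vec.subspace_span]
    by (rule vec.span_minimal[rotated]) (intro image_mono vec.span_superset)
qed

lemma semilinear_image_independent:
  assumes f: "semilinear f" and B: "vec.independent B"
  shows "vec.independent (f ` B)"
proof
  have inj: "inj f" using semilinear_bij[OF f] by (rule bij_is_inj)
  assume "vec.dependent (f ` B)"
  then obtain b where b: "b \<in> B" "f b \<in> vec.span (f ` B - {f b})"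
    unfolding vec.dependent_def by auto
  have "f ` B - {f b} = f ` (B - {b})" using inj by (auto simp: inj_def)
  then have "f b \<in> f ` vec.span (B - {b})"
    using b(2) by (simp add: semilinear_image_span[OF f])
  then have "b \<in> vec.span (B - {b})" using inj by (auto simp: inj_def)
  then show False using B b(1) unfolding vec.dependent_def by blast
qed

lemma dim_semilinear_image:
  assumes f: "semilinear f"
  shows "vec.dim (f ` S) = vec.dim S"
proof -
  obtain B where B: "B \<subseteq> S" "vec.independent B" "S \<subseteq> vec.span B" "card B = vec.dim S"
    by (rule vec.basis_exists)
  have "card (f ` B) = card B"
    using semilinear_bij[OF f] by (intro card_image) (auto simp: bij_def intro: inj_on_subset)
  moreover have "f ` S \<subseteq> vec.span (f ` B)"
    using B(3) semilinear_image_span[OF f, of B] by blast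
  moreover have "f ` B \<subseteq> f ` S" using B(1) by (rule image_mono)
  ultimately show ?thesis
    using vec.basis_card_eq_dim[of "f ` B" "f ` S"] B(4) semilinear_image_independent[OF f B(2)]
    by simp
qed

section \<open>The action of Aut(PSL_d(q)) on flags\<close>

lemma finite_flags2: "finite (flags2 k :: ('a::{field,finite}^'n) set set set)"
  by (rule finite_subset[OF subset_UNIV]) simp

lemma flags2I:
  "vec.subspace W \<Longrightarrow> vec.subspace U \<Longrightarrow> vec.dim W = k \<Longrightarrow> vec.dim U = CARD('n) - k \<Longrightarrow>
    W \<subseteq> U \<Longrightarrow> {W, U} \<in> (flags2 k :: ('a::{field,finite}^'n) set set set)"
  unfolding flags2_def by blast

lemma flags2E:
  assumes "a \<in> (flags2 k :: ('a::{field,finite}^'n) set set set)"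
  obtains W U where "a = {W, U}" "vec.subspace W" "vec.subspace U" "vec.dim W = k"
    "vec.dim U = CARD('n) - k" "W \<subseteq> U"
  using assms unfolding flags2_def by blast

lemma semilinear_image_flags2:
  fixes f :: "'a::{field,finite}^'n \<Rightarrow> 'a^'n"
  assumes "semilinear f" "a \<in> flags2 k"
  shows "(\<lambda>S. f ` S) ` a \<in> flags2 k"
proof -
  obtain W U where "a = {W, U}" "vec.subspace W" "vec.subspace U" "vec.dim W = k"
    "vec.dim U = CARD('n) - k" "W \<subseteq> U"
    using assms(2) by (rule flags2E)
  then show ?thesis
    using assms(1) by (simp add: flags2I semilinear_image_subspace dim_semilinear_image image_mono)
qed

lemma std_perp_image_flags2:
  assumes "k \<le> CARD('n)" "a \<in> (flags2 k :: ('a::{field,finite}^'n) set set set)"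
  shows "std_perp ` a \<in> flags2 k"
proof -
  obtain W U where "a = {W, U}" "vec.subspace W" "vec.subspace U" "vec.dim W = k"
    "vec.dim U = CARD('n) - k" "W \<subseteq> U"
    using assms(2) by (rule flags2E)
  then have "{std_perp U, std_perp W} \<in> (flags2 k :: ('a^'n) set set set)"
    using assms(1) by (intro flags2I subspace_std_perp std_perp_antimono) (simp_all add: dim_std_perp)
  then show ?thesis using \<open>a = {W, U}\<close> by (simp add: insert_commute)
qed

lemma induced_in_Bij:
  assumes "finite Om" "\<forall>a\<in>Om. h ` a \<in> Om" "inj_on h (\<Union>Om)"
  shows "induced h Om \<in> Bij Om"
proof -
  have "inj_on ((`) h) Om"
    using inj_on_image_eq_iff[OF assms(3)] by (auto intro!: inj_onI)
  then have "(`) h ` Om = Om"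
    using assms(1,2) by (intro endo_inj_surj) auto
  then have "bij_betw ((`) h) Om Om"
    using \<open>inj_on ((`) h) Om\<close> by (simp add: bij_betw_def)
  then show ?thesis
    by (simp add: Bij_def induced_def)
qed

lemma semilinear_perm_in_Bij:
  fixes f :: "'a::{field,finite}^'n \<Rightarrow> 'a^'n"
  assumes "semilinear f"
  shows "induced (\<lambda>S. f ` S) (flags2 k) \<in> Bij (flags2 k :: ('a::{field,finite}^'n) set set set)"
proof (intro induced_in_Bij finite_flags2 ballI)
  show "(\<lambda>S. f ` S) ` a \<in> flags2 k" if "a \<in> flags2 k" for a
    using assms that by (rule semilinear_image_flags2)
  have "inj f" using semilinear_bij[OF assms] by (rule bij_is_inj)
  then have "inj (\<lambda>S. f ` S)" by (simp add: inj_def inj_image_eq_iff)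
  then show "inj_on (\<lambda>S. f ` S) (\<Union>(flags2 k :: ('a^'n) set set set))"
    by (rule inj_on_subset) simp
qed

lemma iota_perm_in_Bij:
  assumes "k \<le> CARD('n)"
  shows "iota_perm k \<in> Bij (flags2 k :: ('a::{field,finite}^'n) set set set)"
  unfolding iota_perm_def
proof (intro induced_in_Bij finite_flags2 ballI)
  show "std_perp ` a \<in> flags2 k" if "a \<in> flags2 k" for a :: "('a^'n) set set"
    using std_perp_image_flags2[OF assms that] .
  have "vec.subspace S" if S: "S \<in> \<Union>(flags2 k :: ('a^'n) set set set)" for S
  proof -
    obtain a where "a \<in> flags2 k" "S \<in> a" using S by blast
    then show ?thesis by (metis flags2E insertE singletonD)
  qed
  then show "inj_on std_perp (\<Union>(flags2 k :: ('a^'n) set set set))"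
    by (metis inj_onI std_perp_std_perp)
qed

lemma Aut_perms_preserves_meeting:
  assumes "k \<le> CARD('n)" "g \<in> Aut_perms k"
  shows "preserves_meeting (flags2 k :: ('a::{field,finite}^'n) set set set) g"
proof (rule preserves_meeting_generate[OF finite_flags2])
  show "insert (iota_perm k) (PGammaL_perms k) \<subseteq> Bij (flags2 k :: ('a^'n) set set set)"
    unfolding insert_subset PGammaL_perms_def
    using iota_perm_in_Bij[OF assms(1)] semilinear_perm_in_Bij by blast
  show "\<forall>h\<in>insert (iota_perm k) (PGammaL_perms k). preserves_meeting (flags2 k :: ('a^'n) set set set) h"
    unfolding PGammaL_perms_def iota_perm_def using preserves_meeting_induced by blast
  show "g \<in> generate (BijGroup (flags2 k)) (insert (iota_perm k) (PGammaL_perms k))"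
    using assms(2) by (simp add: Aut_perms_def)
qed

lemma flags2_unique_meeting:
  fixes W W' U U' :: "('a::{field,finite}^'n) set"
  assumes dims: "vec.dim W = k" "vec.dim W' = k" "vec.dim U = CARD('n) - k" "vec.dim U' = CARD('n) - k"
    and "2 * k \<noteq> CARD('n)" "W \<noteq> W'" "U \<noteq> U'" "\<not> W' \<subseteq> U'"
    and c: "c \<in> flags2 k" "c \<inter> {W, U'} \<noteq> {}" "c \<inter> {W', U} \<noteq> {}"
  shows "c = {W, U}"
proof -
  obtain A B where AB: "c = {A, B}" "vec.dim A = k" "vec.dim B = CARD('n) - k" "A \<subseteq> B"
    using c(1) by (rule flags2E)
  have "k \<noteq> CARD('n) - k" using assms(5) by simp
  then have "A = W \<or> B = U'" "A = W' \<or> B = U"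
    using c(2,3) dims AB(1-3) by auto
  then show ?thesis
    using assms(6-8) AB(1,4) by auto
qed

section \<open>Transvections and coordinate flags\<close>

definition transvection :: "'n::finite \<Rightarrow> 'n \<Rightarrow> 'a::field^'n^'n" where
  "transvection i j = (\<chi> r c. (if r = c then 1 else 0) + (if r = i \<and> c = j then 1 else 0))"

lemma transvection_mult: "transvection i j *v x = x + x $ j *s axis i (1::'a::field)"
proof -
  have "(transvection i j *v x) $ l = x $ l + (if l = i then x $ j else 0)" for l
  proof -
    have "(transvection i j *v x) $ l
        = (\<Sum>c\<in>UNIV. ((if l = c then 1 else 0) + (if l = i \<and> c = j then 1 else 0)) * x $ c)"
      unfolding matrix_vector_mult_def transvection_def by (simp only: vec_lambda_beta)
    also have "\<dots> = (\<Sum>c\<in>UNIV. (if l = c then x $ c else 0) + (if l = i \<and> c = j then x $ c else 0))"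
      by (intro sum.cong) (auto simp: distrib_right)
    finally show ?thesis by (simp add: sum.distrib)
  qed
  then show ?thesis by (simp add: vec_eq_iff axis_def)
qed

lemma det_transvection:
  assumes "i \<noteq> j"
  shows "det (transvection i j :: 'a::field^'n^'n) = 1"
proof -
  let ?I = "mat 1 :: 'a^'n^'n"
  have "transvection i j = (\<chi> k. if k = i then row i ?I + 1 *s row j ?I else row k ?I)"
    by (simp add: vec_eq_iff transvection_def row_def mat_def)
  then show ?thesis using det_row_operation[OF assms, of ?I 1] by simp
qed

lemma transvection_image_coordinate_subspace:
  assumes "i \<noteq> j" "j \<in> J \<longrightarrow> i \<in> J"
  shows "(\<lambda>x. transvection i j *v x) ` coordinate_subspace J = (coordinate_subspace J :: ('a::field^'n) set)"
proof
  show "(\<lambda>x. transvection i j *v x) ` coordinate_subspace J \<subseteq> (coordinate_subspace J :: ('a^'n) set)"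
    using assms by (auto simp: transvection_mult coordinate_subspace_def axis_def)
  show "coordinate_subspace J \<subseteq> (\<lambda>x. transvection i j *v x) ` (coordinate_subspace J :: ('a^'n) set)"
  proof
    fix y :: "'a^'n" assume y: "y \<in> coordinate_subspace J"
    let ?x = "y - y $ j *s axis i 1"
    have "?x \<in> coordinate_subspace J" "transvection i j *v ?x = y"
      using assms y by (auto simp: transvection_mult coordinate_subspace_def axis_def vec_eq_iff)
    then show "y \<in> (\<lambda>x. transvection i j *v x) ` coordinate_subspace J" by (metis imageI)
  qed
qed

text \<open>The image contains the vector with entries 1 at i and j but not the unit vector at j,
  which no coordinate subspace does.\<close>
lemma transvection_image_not_coordinate_subspace:
  assumes "i \<noteq> j" "j \<in> J" "i \<notin> J"
  shows "(\<lambda>x. transvection i j *v x) ` coordinate_subspace J \<noteq> (coordinate_subspace J' :: ('a::field^'n) set)"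
proof
  let ?T = "\<lambda>x. transvection i j *v x :: 'a^'n"
  assume eq: "?T ` coordinate_subspace J = coordinate_subspace J'"
  have "?T (axis j 1) \<in> ?T ` coordinate_subspace J"
    using assms(2) by (intro imageI) (simp add: axis_in_coordinate_subspace)
  moreover have "?T (axis j 1) $ j = 1"
    using assms(1) by (simp add: transvection_mult axis_def)
  ultimately have "j \<in> J'"
    unfolding eq by (auto simp: coordinate_subspace_def)
  then have "axis j 1 \<in> ?T ` coordinate_subspace J"
    unfolding eq by (simp add: axis_in_coordinate_subspace)
  then obtain x where x: "x \<in> coordinate_subspace J" "?T x = axis j 1"
    unfolding image_iff by (metis (no_types))
  have xi: "x $ i = 0" using x(1) assms(3) by (simp add: coordinate_subspace_def)
  have "?T x $ i = x $ i + x $ j" by (simp add: transvection_mult axis_def)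
  then have xj: "x $ j = 0" using x(2) xi assms(1) by (simp add: axis_def)
  then have "x = axis j 1" using x(2) by (simp add: transvection_mult)
  then show False using xj by (simp add: axis_def)
qed

definition transvection_perm :: "nat \<Rightarrow> 'n \<Rightarrow> 'n \<Rightarrow> ('a::{field,finite}^'n::finite) set set \<Rightarrow> ('a^'n) set set" where
  "transvection_perm k i j = induced (\<lambda>S. (\<lambda>x. transvection i j *v x) ` S) (flags2 k)"

lemma transvection_perm_in_PSL_perms: "i \<noteq> j \<Longrightarrow> transvection_perm k i j \<in> PSL_perms k"
  unfolding transvection_perm_def PSL_perms_def using det_transvection by blast

definition coordinate_flag :: "'n set \<Rightarrow> 'n set \<Rightarrow> ('a::field^'n) set set" where
  "coordinate_flag JW JU = {coordinate_subspace JW, coordinate_subspace JU}"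

lemma coordinate_flag_in_flags2:
  assumes "card JW = k" "card JU = CARD('n) - k" "JW \<subseteq> JU"
  shows "(coordinate_flag JW JU :: ('a::{field,finite}^'n::finite) set set) \<in> flags2 k"
  unfolding coordinate_flag_def using assms
  by (intro flags2I subspace_coordinate_subspace) (simp_all add: dim_coordinate_subspace coordinate_subspace_subset_iff)

lemma transvection_perm_fixes_coordinate_flag_iff:
  assumes "(coordinate_flag JW JU :: ('a::{field,finite}^'n::finite) set set) \<in> flags2 k" "i \<noteq> j"
  shows "transvection_perm k i j (coordinate_flag JW JU :: ('a^'n) set set) = coordinate_flag JW JU
    \<longleftrightarrow> (j \<in> JW \<longrightarrow> i \<in> JW) \<and> (j \<in> JU \<longrightarrow> i \<in> JU)"
proof -
  let ?T = "\<lambda>S. (\<lambda>x. transvection i j *v x) ` S :: ('a^'n) set"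
  have perm: "transvection_perm k i j (coordinate_flag JW JU) = {?T (coordinate_subspace JW), ?T (coordinate_subspace JU)}"
    using assms(1) by (simp add: transvection_perm_def induced_def coordinate_flag_def)
  show ?thesis
  proof (cases "(j \<in> JW \<longrightarrow> i \<in> JW) \<and> (j \<in> JU \<longrightarrow> i \<in> JU)")
    case True
    then show ?thesis
      unfolding perm using assms(2)
      by (simp add: transvection_image_coordinate_subspace coordinate_flag_def)
  next
    case False
    then have "?T (coordinate_subspace JW) \<notin> coordinate_flag JW JU \<or> ?T (coordinate_subspace JU) \<notin> coordinate_flag JW JU"
      using assms(2) transvection_image_not_coordinate_subspace[where 'a='a]
      by (auto simp: coordinate_flag_def)
    then show ?thesis
      unfolding perm using False by auto
  qed
qed

text \<open>W, W', U, U' of the proof idea are the coordinate subspaces on insert a K, insert p K,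
  - insert r N and - insert p N.\<close>
locale index_configuration =
  fixes k :: nat and a p r :: "'n::finite" and K N :: "'n set"
  assumes k_bounds: "1 \<le> k" "2 * k < CARD('n)"
    and distinct: "a \<noteq> p" "a \<noteq> r" "p \<noteq> r"
    and disjoint: "a \<notin> K" "p \<notin> K" "r \<notin> K" "a \<notin> N" "p \<notin> N" "r \<notin> N" "K \<inter> N = {}"
    and card_K_N: "card K = k - 1" "card N = k - 1"
begin

lemma finite_K_N: "finite K" "finite N"
  using card_K_N k_bounds by (auto intro: card_ge_0_finite)

lemma card_insert_K: "card (insert a K) = k" "card (insert p K) = k"
  using finite_K_N card_K_N k_bounds disjoint by simp_all

lemma card_Compl_insert_N:
  "card (- insert r N) = CARD('n) - k" "card (- insert p N) = CARD('n) - k"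
  using card_Diff_subset[of "insert r N" UNIV] card_Diff_subset[of "insert p N" UNIV]
    finite_K_N card_K_N k_bounds disjoint
  by (simp_all add: Compl_eq_Diff_UNIV)

lemma coordinate_flags_in_flags2:
  "(coordinate_flag (insert a K) (- insert r N) :: ('a::{field,finite}^'n) set set) \<in> flags2 k"
  "(coordinate_flag (insert a K) (- insert p N) :: ('a^'n) set set) \<in> flags2 k"
  "(coordinate_flag (insert p K) (- insert r N) :: ('a^'n) set set) \<in> flags2 k"
  using distinct disjoint
  by (auto intro!: coordinate_flag_in_flags2 simp: card_insert_K card_Compl_insert_N)

lemma unique_flag_meeting_both:
  assumes "c \<in> flags2 k"
    and "c \<inter> coordinate_flag (insert a K) (- insert p N) \<noteq> {}"
    and "c \<inter> coordinate_flag (insert p K) (- insert r N) \<noteq> {}"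
  shows "c = (coordinate_flag (insert a K) (- insert r N) :: ('a::{field,finite}^'n) set set)"
proof -
  have "coordinate_subspace (insert a K) \<noteq> (coordinate_subspace (insert p K) :: ('a^'n) set)"
    "coordinate_subspace (- insert r N) \<noteq> (coordinate_subspace (- insert p N) :: ('a^'n) set)"
    "\<not> coordinate_subspace (insert p K) \<subseteq> (coordinate_subspace (- insert p N) :: ('a^'n) set)"
    using distinct disjoint by (auto simp: coordinate_subspace_subset_iff dest!: equalityD1)
  moreover have "vec.dim (coordinate_subspace (insert a K) :: ('a^'n) set) = k"
    "vec.dim (coordinate_subspace (insert p K) :: ('a^'n) set) = k"
    "vec.dim (coordinate_subspace (- insert r N) :: ('a^'n) set) = CARD('n) - k"
    "vec.dim (coordinate_subspace (- insert p N) :: ('a^'n) set) = CARD('n) - k"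
    by (simp_all add: dim_coordinate_subspace card_insert_K card_Compl_insert_N)
  ultimately show ?thesis
    using assms k_bounds unfolding coordinate_flag_def
    by (intro flags2_unique_meeting[where W' = "coordinate_subspace (insert p K)"
          and U' = "coordinate_subspace (- insert p N)"]) simp_all
qed

lemma irredundant_flag_seqs:
  assumes "PSL_perms k \<subseteq> G"
  shows "irredundant_seq G [coordinate_flag (insert a K) (- insert r N),
      coordinate_flag (insert a K) (- insert p N), coordinate_flag (insert p K) (- insert r N)
      :: ('a::{field,finite}^'n) set set]"
    and "irredundant_seq G [coordinate_flag (insert a K) (- insert p N),
      coordinate_flag (insert p K) (- insert r N) :: ('a^'n) set set]"
proof -
  let ?y = "coordinate_flag (insert a K) (- insert r N) :: ('a^'n) set set"
  let ?x1 = "coordinate_flag (insert a K) (- insert p N) :: ('a^'n) set set"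
  let ?x2 = "coordinate_flag (insert p K) (- insert r N) :: ('a^'n) set set"
  have perm: "transvection_perm k i j \<in> G" if "i \<noteq> j" for i j
    using assms transvection_perm_in_PSL_perms[OF that] by blast
  note fixes_iff = transvection_perm_fixes_coordinate_flag_iff[OF coordinate_flags_in_flags2(1)]
    transvection_perm_fixes_coordinate_flag_iff[OF coordinate_flags_in_flags2(2)]
    transvection_perm_fixes_coordinate_flag_iff[OF coordinate_flags_in_flags2(3)]
  have "irredundant_seq G [?y]"
    using irredundant_seq_snocI[OF irredundant_seq_Nil perm[of r a], of ?y]
      distinct disjoint by (simp add: fixes_iff)
  then have "irredundant_seq G [?y, ?x1]"
    using irredundant_seq_snocI[OF _ perm[of p r], of "[?y]" ?x1]
      distinct disjoint by (simp add: fixes_iff)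
  then show "irredundant_seq G [?y, ?x1, ?x2]"
    using irredundant_seq_snocI[OF _ perm[of a p], of "[?y, ?x1]" ?x2]
      distinct disjoint by (simp add: fixes_iff)
  have "irredundant_seq G [?x1]"
    using irredundant_seq_snocI[OF irredundant_seq_Nil perm[of p a], of ?x1]
      distinct disjoint by (simp add: fixes_iff)
  then show "irredundant_seq G [?x1, ?x2]"
    using irredundant_seq_snocI[OF _ perm[of a p], of "[?x1]" ?x2]
      distinct disjoint by (simp add: fixes_iff)
qed

end

lemma index_configuration_exists:
  assumes "1 \<le> k" "2 * k < CARD('n::finite)"
  obtains a p r :: "'n::finite" and K N where "index_configuration k a p r K N"
proof -
  have "k - 1 \<le> card (UNIV :: 'n set)" using assms by simp
  then obtain K :: "'n set" where K: "card K = k - 1"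
    by (metis obtain_subset_with_card_n)
  have "k - 1 \<le> card (- K)"
    using card_Diff_subset[of K UNIV] K assms by (simp add: Compl_eq_Diff_UNIV)
  then obtain N where N: "N \<subseteq> - K" "card N = k - 1"
    by (metis obtain_subset_with_card_n)
  have "K \<inter> N = {}" using N(1) by blast
  then have "card (K \<union> N) = 2 * (k - 1)"
    using N(2) K by (simp add: card_Un_disjoint)
  then have "3 \<le> card (- (K \<union> N))"
    using card_Diff_subset[of "K \<union> N" UNIV] assms by (simp add: Compl_eq_Diff_UNIV)
  then obtain R where R: "R \<subseteq> - (K \<union> N)" "card R = 3"
    by (metis obtain_subset_with_card_n)
  then obtain a p r where "R = {a, p, r}" "a \<noteq> p" "p \<noteq> r" "a \<noteq> r"
    by (auto simp: card_3_iff)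
  then have "index_configuration k a p r K N"
    using R(1) N K assms by unfold_locales auto
  then show thesis by (rule that)
qed

theorem lemma3p6:
  fixes G :: "(('a::{field,finite}^'n) set set \<Rightarrow> ('a^'n) set set) set"
    and k :: nat
  assumes "CARD('n) \<ge> 3"
    and "1 \<le> k" and "2 * k < CARD('n)"
    and "subgroup G (BijGroup (flags2 k :: ('a^'n) set set set))"
    and "PSL_perms k \<subseteq> G"
    and "PSL_perms k \<lhd> (BijGroup (flags2 k :: ('a^'n) set set set))\<lparr>carrier := G\<rparr>"
    and "G \<subseteq> Aut_perms k"
    and "\<not> G \<subseteq> PGammaL_perms k"
  shows "\<not> IBIS (flags2 k :: ('a^'n) set set set) G"
proof -
  obtain a p r :: 'n and K N where "index_configuration k a p r K N"
    using index_configuration_exists assms(2,3) by blast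
  then interpret index_configuration k a p r K N .
  let ?y = "coordinate_flag (insert a K) (- insert r N) :: ('a^'n) set set"
  let ?x1 = "coordinate_flag (insert a K) (- insert p N) :: ('a^'n) set set"
  let ?x2 = "coordinate_flag (insert p K) (- insert r N) :: ('a^'n) set set"
  have "g \<in> Bij (flags2 k) \<and> preserves_meeting (flags2 k :: ('a^'n) set set set) g" if "g \<in> G" for g
    using that subgroup.subset[OF assms(4)] assms(3,7) Aut_perms_preserves_meeting[of k g]
    by (auto simp: BijGroup_def)
  then have "pstab G [?y, ?x1, ?x2] = pstab G [?x1, ?x2]"
    using coordinate_flags_in_flags2 unique_flag_meeting_both
    by (intro pstab_Cons_eq_if_unique_meeting) (auto simp: coordinate_flag_def)
  then show ?thesis
    using coordinate_flags_in_flags2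
    by (intro not_IBIS_if_pstab_eq[OF assms(4) finite_flags2, of "[?y, ?x1, ?x2]" "[?x1, ?x2]"]
        irredundant_flag_seqs[OF assms(5)]) simp_all
qed

end
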